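(* Let $1<k<n-1$. For the transposition $(1\ 2)\in\mathfrak{S}_2$ and $i_1,i_2,j_1,j_2\in\{1,\dots,n\}$, $$\Delta^{n,k}_{(1\,2)}\big((i_1,i_2),(j_1,j_2)\big)=\delta(i_1,j_1)\delta(i_2,j_2)\frac{1}{k^2}\binom{n-2}{k-2}+\delta(i_1,j_2)\delta(i_2,j_1)\frac{1}{k^2}\binom{n-2}{k-1},$$ which equals $\frac{1}{k^2}\binom{n-1}{k-1}$ if $i_1=i_2=j_1=j_2$; $\frac{1}{k^2}\binom{n-2}{k-1}$ if $i_1=j_2\ne i_2=j_1$; $\frac{1}{k^2}\binom{n-2}{k-2}$ if $i_1=j_1\neq i_2=j_2$; and $0$ otherwise.
   Context: $\mathcal{A}_r=\{(a_1,\dots,a_r)\in\{1,\dots,n\}^{\times r}:a_1<\dots<a_r\}$. For $\bm{i}\in\{1,\dots,n\}^{\times k}$: $\mathrm{sgn}(\bm{i})=0$ if its entries are not all distinct, otherwise the sign of the unique permutation sorting $\bm{i}$ increasingly; $\mathrm{sr}(\bm{i})$ is $\bm{i}$ sorted in nondecreasing order; $(i,\bm{l})=(i,l_1,\dots,l_{k-1})$. For $\sigma\in\mathfrak{S}_p$ and $\bm{i},\bm{j}\in\{1,\dots,n\}^{\times p}$, the fermionic $\Delta$-function is $$\Delta^{n,k}_\sigma(\bm{i},\bm{j})=\frac{1}{k^p}\sum_{\substack{\bm{l}^{(1)}\in\mathcal{A}_{k-1}\\ \bm{l}^{(1)}\not\ni i_1,j_1}}\cdots\sum_{\substack{\bm{l}^{(p)}\in\mathcal{A}_{k-1}\\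 \bm{l}^{(p)}\not\ni i_p,j_p}}\prod_{s=1}^p\mathrm{sgn}(i_s,\bm{l}^{(s)})\mathrm{sgn}(j_s,\bm{l}^{(s)})\ \delta_\sigma\Big(\big(\mathrm{sr}(i_s,\bm{l}^{(s)})\big)_{s=1}^p,\big(\mathrm{sr}(j_s,\bm{l}^{(s)})\big)_{s=1}^p\Big),$$ where "$\bm{l}\not\ni i,j$" means neither $i$ nor $j$ is an entry of $\bm{l}$, and $\delta_\sigma(\bm{a},\bm{b})=\prod_{r=1}^p\delta(a_{\sigma(r)},b_r)$ with $\delta$ the Kronecker delta (equality of sequences). *)

theory Defs
  imports Complex_Main "HOL-Combinatorics.Combinatorics"
begin

text \<open>Sequences in {1..n}^r are represented as lists; position s (1-based) of a list xs
  is xs ! (s - 1).\<close>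

definition incr_seqs :: "nat \<Rightarrow> nat \<Rightarrow> nat list set" where
  "incr_seqs n r = {l. length l = r \<and> sorted_wrt (<) l \<and> set l \<subseteq> {1..n}}"

definition seq_sgn :: "nat list \<Rightarrow> int" where
  "seq_sgn xs = (if distinct xs then
      sign (THE \<pi>. \<pi> permutes {..<length xs} \<and>
                 sorted_wrt (<) (map (\<lambda>t. xs ! \<pi> t) [0..<length xs]))
    else 0)"

text \<open>The fermionic Delta-function. sigma is a permutation of {1..p} with p = length i;
  i and j are sequences of length p.\<close>
definition fermionic_Delta ::
  "nat \<Rightarrow> nat \<Rightarrow> (nat \<Rightarrow> nat) \<Rightarrow> nat list \<Rightarrow> nat list \<Rightarrow> real" where
  "fermionic_Delta n k \<sigma> i j =
    (let p = length i in
     (1 / real k ^ p) *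
     (\<Sum>L \<in> PiE {1..p} (\<lambda>s. {l \<in> incr_seqs n (k - 1).
                                   i ! (s - 1) \<notin> set l \<and> j ! (s - 1) \<notin> set l}).
        (\<Prod>s\<in>{1..p}. real_of_int (seq_sgn (i ! (s - 1) # L s) * seq_sgn (j ! (s - 1) # L s)))
        * of_bool (\<forall>r\<in>{1..p}. sort (i ! (\<sigma> r - 1) # L (\<sigma> r)) = sort (j ! (r - 1) # L r))))"

end

theory Submission
  imports Defs
begin

text \<open>For strictly increasing l1, l2 the Kronecker deltas in Delta with sigma = (1 2) only
  compare sets: insert i2 l2 = insert j1 l1 and insert i1 l1 = insert j2 l2. This forces
  (j1, j2) = (i1, i2) or (j1, j2) = (i2, i1), and then the four signs multiply to 1, each occurring
  twice (in the second case l1 = l2). So Delta is k^-2 times the number of such pairs. For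
  (j1, j2) = (i1, i2) with i1 \<noteq> i2 the pair is fixed by l1, which contains i2 and avoids i1; for
  (j1, j2) = (i2, i1) the common l1 = l2 avoids i1 and i2; when all four indices agree, Pascal's
  rule adds the two counts.\<close>

lemma sort_eq_iff_set_eq:
  assumes "distinct xs" and "distinct ys"
  shows "sort xs = sort ys \<longleftrightarrow> set xs = set ys"
  by (metis assms distinct_sort set_sort sorted_distinct_set_unique sorted_sort)

lemma seq_sgn_mult_self: "distinct xs \<Longrightarrow> seq_sgn xs * seq_sgn xs = 1"
  by (simp add: seq_sgn_def sign_def)

lemma incr_seqs_distinct: "l \<in> incr_seqs n r \<Longrightarrow> distinct l"
  by (simp add: incr_seqs_def strict_sorted_iff)

lemma incr_seqs_eqI: "a \<in> incr_seqs n r \<Longrightarrow> b \<in> incr_seqs n r \<Longrightarrow> set a = set b \<Longrightarrow> a = b"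
  unfolding incr_seqs_def strict_sorted_iff by (auto intro: sorted_distinct_set_unique)

lemma sorted_list_of_set_in_incr_seqs:
  "A \<subseteq> {1..n} \<Longrightarrow> card A = r \<Longrightarrow> sorted_list_of_set A \<in> incr_seqs n r"
  by (simp add: incr_seqs_def finite_subset)

lemma finite_incr_seqs: "finite (incr_seqs n r)"
  by (rule finite_subset[OF _ finite_lists_length_eq[of "{1..n}" r]]) (auto simp: incr_seqs_def)

lemma card_incr_seqs_filter:
  "card {l \<in> incr_seqs n r. P (set l)} = card {A. A \<subseteq> {1..n} \<and> card A = r \<and> P A}"
proof -
  have "inj_on set {l \<in> incr_seqs n r. P (set l)}"
    by (auto intro: inj_onI incr_seqs_eqI)
  moreover have "set ` {l \<in> incr_seqs n r. P (set l)} = {A. A \<subseteq> {1..n} \<and> card A = r \<and> P A}"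
  proof (intro equalityI subsetI)
    fix A assume "A \<in> {A. A \<subseteq> {1..n} \<and> card A = r \<and> P A}"
    then have A: "A \<subseteq> {1..n}" "card A = r" "P A"
      by auto
    then have "finite A"
      using finite_subset by blast
    with A have "sorted_list_of_set A \<in> {l \<in> incr_seqs n r. P (set l)}"
      by (simp add: sorted_list_of_set_in_incr_seqs)
    then show "A \<in> set ` {l \<in> incr_seqs n r. P (set l)}"
      by (rule rev_image_eqI) (simp add: \<open>finite A\<close>)
  qed (auto simp: incr_seqs_def distinct_card strict_sorted_iff)
  ultimately show ?thesis
    using card_image by fastforce
qed

lemma card_incr_seqs_avoiding:
  assumes "X \<subseteq> {1..n}"
  shows "card {l \<in> incr_seqs n r. set l \<inter> X = {}} = (n - card X) choose r"
proof -
  have "card {l \<in> incr_seqs n r. set l \<inter> X = {}} = card {A. A \<subseteq> {1..n} \<and> card A = r \<and> A \<inter> X = {}}"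
    by (rule card_incr_seqs_filter)
  also have "\<dots> = card {A. A \<subseteq> {1..n} - X \<and> card A = r}"
    by (rule arg_cong[where f = card]) blast
  also have "\<dots> = card ({1..n} - X) choose r"
    by (simp add: n_subsets)
  also have "card ({1..n} - X) = n - card X"
    using assms by (simp add: card_Diff_subset finite_subset)
  finally show ?thesis .
qed

lemma choose_pred_pascal:
  assumes "2 \<le> n" and "0 < r"
  shows "(n - 1) choose r = ((n - 2) choose (r - 1)) + ((n - 2) choose r)"
proof -
  obtain m where "n = Suc (Suc m)"
    using assms(1) by (auto dest: le_Suc_ex)
  moreover obtain s where "r = Suc s"
    using assms(2) gr0_implies_Suc by blast
  ultimately show ?thesis
    by simp
qed

lemma card_incr_seqs_avoiding_containing:
  assumes "i \<in> {1..n}" and "j \<in> {1..n}" and "i \<noteq> j" and "0 < r"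
  shows "card {l \<in> incr_seqs n r. i \<notin> set l \<and> j \<in> set l} = (n - 2) choose (r - 1)"
proof -
  let ?avoid = "\<lambda>X. {l \<in> incr_seqs n r. set l \<inter> X = {}}"
  have "{l \<in> incr_seqs n r. i \<notin> set l \<and> j \<in> set l} = ?avoid {i} - ?avoid {i, j}"
    by auto
  moreover have "?avoid {i, j} \<subseteq> ?avoid {i}"
    by blast
  ultimately have "card {l \<in> incr_seqs n r. i \<notin> set l \<and> j \<in> set l} = card (?avoid {i}) - card (?avoid {i, j})"
    by (simp add: card_Diff_subset finite_incr_seqs)
  also have "\<dots> = ((n - 1) choose r) - ((n - 2) choose r)"
    using assms card_incr_seqs_avoiding[of "{i}" n r] card_incr_seqs_avoiding[of "{i, j}" n r]
    by (simp add: numeral_2_eq_2)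
  also have "\<dots> = (n - 2) choose (r - 1)"
    using assms choose_pred_pascal[of n r] by fastforce
  finally show ?thesis .
qed

lemma insert_exchange_cases:
  assumes ba: "insert i2 B = insert j1 A" and ab: "insert i1 A = insert j2 B"
    and "i1 \<notin> A" and "j1 \<notin> A" and "i2 \<notin> B" and "j2 \<notin> B"
  shows "(i1 = j1 \<and> i2 = j2) \<or> (i1 = j2 \<and> i2 = j1)"
proof (cases "i1 = j1")
  case True
  then have "insert i2 B = insert j2 B"
    using ba ab by simp
  then show ?thesis
    using True \<open>i2 \<notin> B\<close> \<open>j2 \<notin> B\<close> by (metis insertCI insertE)
next
  case False
  have "i1 \<in> insert j1 A \<longrightarrow> i1 = j1"
    using \<open>i1 \<notin> A\<close> by simp
  then have "i1 \<notin> B"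
    using ba False by (metis insertCI)
  then have "i1 = j2"
    using ab by (metis insertE insertI1)
  then have "A = B"
    using ab \<open>i1 \<notin> A\<close> \<open>i1 \<notin> B\<close> by (metis insert_ident)
  then have "i2 = j1"
    using ba \<open>i2 \<notin> B\<close> \<open>j1 \<notin> A\<close> by (metis insertCI insertE)
  with \<open>i1 = j2\<close> show ?thesis
    by simp
qed

definition exchange_pairs :: "nat \<Rightarrow> nat \<Rightarrow> nat \<Rightarrow> nat \<Rightarrow> nat \<Rightarrow> nat \<Rightarrow> (nat list \<times> nat list) set" where
  "exchange_pairs n r i1 i2 j1 j2 =
     {(a, b). a \<in> incr_seqs n r \<and> b \<in> incr_seqs n r \<and>
        i1 \<notin> set a \<and> j1 \<notin> set a \<and> i2 \<notin> set b \<and> j2 \<notin> set b \<and>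
        insert i2 (set b) = insert j1 (set a) \<and> insert i1 (set a) = insert j2 (set b)}"

lemma exchange_pairs_empty:
  assumes "\<not> (i1 = j1 \<and> i2 = j2)" and "\<not> (i1 = j2 \<and> i2 = j1)"
  shows "exchange_pairs n r i1 i2 j1 j2 = {}"
  using assms insert_exchange_cases by (fastforce simp: exchange_pairs_def)

lemma card_exchange_pairs_transposed:
  assumes "{i1, i2} \<subseteq> {1..n}"
  shows "card (exchange_pairs n r i1 i2 i2 i1) = (n - card {i1, i2}) choose r"
proof -
  have "exchange_pairs n r i1 i2 i2 i1 = (\<lambda>a. (a, a)) ` {a \<in> incr_seqs n r. set a \<inter> {i1, i2} = {}}"
  proof (intro equalityI subsetI)
    fix x assume "x \<in> exchange_pairs n r i1 i2 i2 i1"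
    then obtain a b where x: "x = (a, b)" and ab: "(a, b) \<in> exchange_pairs n r i1 i2 i2 i1"
      by (cases x) auto
    then have "i1 \<notin> set a" "i1 \<notin> set b" "insert i1 (set a) = insert i1 (set b)"
      unfolding exchange_pairs_def by auto
    then have "set a = set b"
      by (simp add: insert_ident)
    with ab have "b = a"
      unfolding exchange_pairs_def by (auto intro: incr_seqs_eqI)
    with x ab show "x \<in> (\<lambda>a. (a, a)) ` {a \<in> incr_seqs n r. set a \<inter> {i1, i2} = {}}"
      unfolding exchange_pairs_def by auto
  qed (auto simp: exchange_pairs_def)
  then have "card (exchange_pairs n r i1 i2 i2 i1) = card {a \<in> incr_seqs n r. set a \<inter> {i1, i2} = {}}"
    by (simp add: card_image inj_on_def)
  then show ?thesis
    using card_incr_seqs_avoiding[OF assms] by simp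
qed

lemma card_exchange_pairs_identical:
  assumes "i1 \<in> {1..n}" and "i2 \<in> {1..n}" and "i1 \<noteq> i2" and "0 < r"
  shows "card (exchange_pairs n r i1 i2 i1 i2) = (n - 2) choose (r - 1)"
proof -
  let ?E = "exchange_pairs n r i1 i2 i1 i2"
  let ?G = "{a \<in> incr_seqs n r. i1 \<notin> set a \<and> i2 \<in> set a}"
  have E: "(a, b) \<in> ?E \<longleftrightarrow> a \<in> incr_seqs n r \<and> b \<in> incr_seqs n r \<and> i1 \<notin> set a \<and>
      i2 \<notin> set b \<and> set b = insert i1 (set a) - {i2} \<and> i2 \<in> set a" for a b
    using assms(3) by (auto simp: exchange_pairs_def)
  have "inj_on fst ?E"
    by (rule inj_onI) (auto simp: E intro: incr_seqs_eqI)
  moreover have "fst ` ?E = ?G"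
  proof (intro equalityI subsetI)
    fix a assume a: "a \<in> ?G"
    let ?B = "insert i1 (set a) - {i2}"
    have "card ?B = r"
      using a assms(3) by (simp add: incr_seqs_def distinct_card strict_sorted_iff)
    moreover have "?B \<subseteq> {1..n}"
      using a assms(1) by (auto simp: incr_seqs_def)
    ultimately have "(a, sorted_list_of_set ?B) \<in> ?E"
      using a by (simp add: E sorted_list_of_set_in_incr_seqs)
    then show "a \<in> fst ` ?E"
      by (rule rev_image_eqI) simp
  qed (auto simp: E)
  ultimately have "card ?E = card ?G"
    using card_image by fastforce
  then show ?thesis
    using card_incr_seqs_avoiding_containing[OF assms] by simp
qed

lemma card_exchange_pairs:
  assumes "{i1, i2, j1, j2} \<subseteq> {1..n}" and "2 \<le> n" and "0 < r"
  shows "card (exchange_pairs n r i1 i2 j1 j2) =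
           of_bool (i1 = j1 \<and> i2 = j2) * ((n - 2) choose (r - 1))
         + of_bool (i1 = j2 \<and> i2 = j1) * ((n - 2) choose r)"
proof -
  consider (equal) "i1 = i2" "i2 = j1" "j1 = j2"
    | (transposed) "i1 = j2" "i2 = j1" "i1 \<noteq> i2"
    | (identical) "i1 = j1" "i2 = j2" "i1 \<noteq> i2"
    | (neither) "\<not> (i1 = j1 \<and> i2 = j2)" "\<not> (i1 = j2 \<and> i2 = j1)"
    by blast
  then show ?thesis
  proof cases
    case equal
    then show ?thesis
      using assms card_exchange_pairs_transposed[of i1 i1 n r] choose_pred_pascal[of n r] by simp
  next
    case transposed
    then show ?thesis
      using assms card_exchange_pairs_transposed[of i1 i2 n r] by (simp add: numeral_2_eq_2)
  next
    case identical
    then show ?thesis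
      using assms card_exchange_pairs_identical[of i1 n i2 r] by simp
  next
    case neither
    then show ?thesis
      by (simp add: exchange_pairs_empty)
  qed
qed

lemma exchange_summand_eq_indicator:
  assumes "a \<in> incr_seqs n r" and "b \<in> incr_seqs n r"
    and "i1 \<notin> set a" and "j1 \<notin> set a" and "i2 \<notin> set b" and "j2 \<notin> set b"
  shows "seq_sgn (i1 # a) * seq_sgn (j1 # a) * (seq_sgn (i2 # b) * seq_sgn (j2 # b))
           * of_bool (sort (i2 # b) = sort (j1 # a) \<and> sort (i1 # a) = sort (j2 # b))
         = of_bool ((a, b) \<in> exchange_pairs n r i1 i2 j1 j2)"
proof -
  have distinct: "distinct (i1 # a)" "distinct (j1 # a)" "distinct (i2 # b)" "distinct (j2 # b)"
    using assms by (auto dest: incr_seqs_distinct)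
  have sorts_iff: "(sort (i2 # b) = sort (j1 # a) \<and> sort (i1 # a) = sort (j2 # b))
      \<longleftrightarrow> (a, b) \<in> exchange_pairs n r i1 i2 j1 j2"
    unfolding sort_eq_iff_set_eq[OF distinct(3,2)] sort_eq_iff_set_eq[OF distinct(1,4)]
    using assms by (simp add: exchange_pairs_def)
  have "seq_sgn (i1 # a) * seq_sgn (j1 # a) * (seq_sgn (i2 # b) * seq_sgn (j2 # b)) = 1"
    if ab: "(a, b) \<in> exchange_pairs n r i1 i2 j1 j2"
  proof -
    have exchange: "insert i2 (set b) = insert j1 (set a)" "insert i1 (set a) = insert j2 (set b)"
      using ab by (auto simp: exchange_pairs_def)
    from insert_exchange_cases[OF exchange assms(3-6)]
    show ?thesis
    proof
      assume "i1 = j1 \<and> i2 = j2"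
      then show ?thesis
        using seq_sgn_mult_self[OF distinct(1)] seq_sgn_mult_self[OF distinct(3)] by simp
    next
      assume swap: "i1 = j2 \<and> i2 = j1"
      then have "set a = set b"
        using exchange(2) assms(3,6) by (simp add: insert_ident)
      then have "b = a"
        using assms(1,2) by (auto intro: incr_seqs_eqI)
      then show ?thesis
        using swap seq_sgn_mult_self[OF distinct(1)] seq_sgn_mult_self[OF distinct(3)]
        by (simp add: mult.assoc mult.left_commute)
    qed
  qed
  with sorts_iff show ?thesis
    by auto
qed

lemma bij_betw_pair_PiE:
  assumes "x \<noteq> y"
  shows "bij_betw (\<lambda>(a, b). \<lambda>s\<in>{x, y}. if s = x then a else b) (F x \<times> F y) (PiE {x, y} F)"
proof (rule bij_betwI[where g = "\<lambda>L. (L x, L y)"])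
  show "(\<lambda>(a, b). \<lambda>s\<in>{x, y}. if s = x then a else b) \<in> F x \<times> F y \<rightarrow> PiE {x, y} F"
    using assms by (auto split: if_splits)
  show "(\<lambda>(a, b). \<lambda>s\<in>{x, y}. if s = x then a else b) (L x, L y) = L" if "L \<in> PiE {x, y} F" for L
    using that by (auto simp: PiE_def extensional_def fun_eq_iff)
qed (use assms in auto)

lemma fermionic_Delta_transposition_eq_card:
  "fermionic_Delta n k (Transposition.transpose 1 2) [i1, i2] [j1, j2] =
     1 / real k ^ 2 * real (card (exchange_pairs n (k - 1) i1 i2 j1 j2))"
proof -
  let ?E = "exchange_pairs n (k - 1) i1 i2 j1 j2"
  define F where "F s = {l \<in> incr_seqs n (k - 1). [i1, i2] ! (s - 1) \<notin> set l \<and> [j1, j2] ! (s - 1) \<notin> set l}"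
    for s
  have "{1..length [i1, i2]} = {1, 2}"
    by auto
  then have "fermionic_Delta n k (Transposition.transpose 1 2) [i1, i2] [j1, j2] =
      1 / real k ^ 2 * (\<Sum>L \<in> PiE {1, 2} F.
        (\<Prod>s\<in>{1, 2}. real_of_int (seq_sgn ([i1, i2] ! (s - 1) # L s) * seq_sgn ([j1, j2] ! (s - 1) # L s)))
        * of_bool (\<forall>r\<in>{1, 2}. sort ([i1, i2] ! (Transposition.transpose 1 2 r - 1) # L (Transposition.transpose 1 2 r))
                                = sort ([j1, j2] ! (r - 1) # L r)))"
    unfolding fermionic_Delta_def Let_def F_def by (simp only: length_Cons list.size numeral_2_eq_2)
  also have "\<dots> = 1 / real k ^ 2 * (\<Sum>(a, b) \<in> F 1 \<times> F 2. real_of_int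
      (seq_sgn (i1 # a) * seq_sgn (j1 # a) * (seq_sgn (i2 # b) * seq_sgn (j2 # b))
       * of_bool (sort (i2 # b) = sort (j1 # a) \<and> sort (i1 # a) = sort (j2 # b))))"
    by (subst sum.reindex_bij_betw[OF bij_betw_pair_PiE, symmetric])
       (auto intro!: sum.cong simp: transpose_def)
  also have "\<dots> = 1 / real k ^ 2 * (\<Sum>x \<in> F 1 \<times> F 2. of_bool (x \<in> ?E))"
  proof (intro arg_cong[where f = "(*) _"] sum.cong refl)
    fix x assume "x \<in> F 1 \<times> F 2"
    then obtain a b where x: "x = (a, b)" and "a \<in> F 1" "b \<in> F 2"
      by blast
    then have "seq_sgn (i1 # a) * seq_sgn (j1 # a) * (seq_sgn (i2 # b) * seq_sgn (j2 # b))
        * of_bool (sort (i2 # b) = sort (j1 # a) \<and> sort (i1 # a) = sort (j2 # b)) = of_bool ((a, b) \<in> ?E)"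
      unfolding F_def by (intro exchange_summand_eq_indicator) auto
    then show "(case x of (a, b) \<Rightarrow> real_of_int
        (seq_sgn (i1 # a) * seq_sgn (j1 # a) * (seq_sgn (i2 # b) * seq_sgn (j2 # b))
         * of_bool (sort (i2 # b) = sort (j1 # a) \<and> sort (i1 # a) = sort (j2 # b)))) = of_bool (x \<in> ?E)"
      by (simp only: x case_prod_conv of_int_of_bool)
  qed
  also have "\<dots> = 1 / real k ^ 2 * real (card ?E)"
  proof -
    have "?E \<subseteq> F 1 \<times> F 2"
      by (auto simp: F_def exchange_pairs_def)
    then have "F 1 \<times> F 2 \<inter> {x. x \<in> ?E} = ?E"
      by blast
    then show ?thesis
      by (simp add: sum_of_bool_eq finite_incr_seqs F_def)
  qed
  finally show ?thesis .
qed

theorem lemma3p5: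
  fixes n k i1 i2 j1 j2 :: nat
  assumes "1 < k" and "k < n - 1"
    and "i1 \<in> {1..n}" and "i2 \<in> {1..n}" and "j1 \<in> {1..n}" and "j2 \<in> {1..n}"
  shows "fermionic_Delta n k (Transposition.transpose 1 2) [i1, i2] [j1, j2] =
           of_bool (i1 = j1) * of_bool (i2 = j2) * (1 / real k ^ 2) * real ((n - 2) choose (k - 2))
         + of_bool (i1 = j2) * of_bool (i2 = j1) * (1 / real k ^ 2) * real ((n - 2) choose (k - 1))
       \<and> fermionic_Delta n k (Transposition.transpose 1 2) [i1, i2] [j1, j2] =
           (if i1 = i2 \<and> i2 = j1 \<and> j1 = j2 then (1 / real k ^ 2) * real ((n - 1) choose (k - 1))
            else if i1 = j2 \<and> i2 = j1 \<and> i1 \<noteq> i2 then (1 / real k ^ 2) * real ((n - 2) choose (k - 1))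
            else if i1 = j1 \<and> i2 = j2 \<and> i1 \<noteq> i2 then (1 / real k ^ 2) * real ((n - 2) choose (k - 2))
            else 0)"
proof -
  have "2 \<le> n" and "0 < k - 1"
    using assms(1,2) by auto
  then have pascal: "(n - 1) choose (k - 1) = ((n - 2) choose (k - 2)) + ((n - 2) choose (k - 1))"
    using choose_pred_pascal by (simp add: numeral_2_eq_2)
  have "card (exchange_pairs n (k - 1) i1 i2 j1 j2) =
          of_bool (i1 = j1 \<and> i2 = j2) * ((n - 2) choose (k - 2))
        + of_bool (i1 = j2 \<and> i2 = j1) * ((n - 2) choose (k - 1))"
    using card_exchange_pairs[of i1 i2 j1 j2 n "k - 1"] assms \<open>2 \<le> n\<close> \<open>0 < k - 1\<close>
    by (simp add: numeral_2_eq_2)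
  then show ?thesis
    unfolding fermionic_Delta_transposition_eq_card using pascal by (auto simp: algebra_simps)
qed

end
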